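(* Let $n,t\in\mathbb{N}$, let $B\subset[n]$ be a random set (defined on the same probability space as the shuffle) and let $D\subset[n]$ be a deterministic set. Suppose that for some $c>0$, $$\min_{j\in D}\mathbb{P}^n_{id}(j\in B\mid j\in A^t)\ge c.$$ Then, writing $K=\mathbb{E}^n_{id}|D\cap A^t|$, for every $r\in(0,1)$, $$\mathbb{P}^n_{id}\Big(|B\cap D\cap A^t|\le r\cdot\mathbb{E}^n_{id}\{|B\cap D\cap A^t|\}\Big)\le\frac{K+(1-c^2)K^2}{(1-r)^2c^2K^2}.$$
   Context: The random-to-random insertions shuffle on a deck of $n$ cards numbered $1,\dots,n$: at each step a card is chosen uniformly at random, removed, and reinserted at a uniformly random position. $\mathbb{P}^n_{id}$ (with expectation $\mathbb{E}^n_{id}$) denotes the law of the shuffling process started from the identity ordering, and $A^t$ denotes the (random) set of cards that have not been chosen for removal in the first $t$ shuffles. $[n]=\{1,\dots,n\}$. *)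

theory Defs
  imports "HOL-Probability.Probability"
begin

text \<open>Canonical probability space of the random-to-random shuffle on n cards.
  Step s+1 (s = 0,1,...) is given by the pair  w !! s = (card chosen for removal,
  position of reinsertion), both uniform on {1..n}, all steps i.i.d.
  The deck is started from the identity ordering; the whole trajectory is a
  deterministic function of the stream w, so this space carries the process.\<close>
definition shuffle_space :: "nat \<Rightarrow> (nat \<times> nat) stream measure" where
  "shuffle_space n = stream_space (measure_pmf (pmf_of_set ({1..n} \<times> {1..n})))"

definition unchosen :: "nat \<Rightarrow> nat \<Rightarrow> (nat \<times> nat) stream \<Rightarrow> nat set" where
  "unchosen n t w = {1..n} - {fst (w !! s) | s. s < t}"

end

theory Submission
  imports Defs
begin

text \<open>Let \<open>A\<^sub>j\<close> be the event that card \<open>j\<close> is never chosen in the first \<open>t\<close> steps; then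
  \<open>|B \<inter> D \<inter> A\<^sup>t|\<close> is the sum over \<open>j \<in> D\<close> of the indicators of \<open>{j \<in> B} \<inter> A\<^sub>j\<close>. Removals
  are i.i.d. and two distinct cards are never removed in the same step, so
  \<open>P(A\<^sub>j \<inter> A\<^sub>k) = (1 - 2/n)\<^sup>t \<le> P(A\<^sub>j) P(A\<^sub>k)\<close> for \<open>j \<noteq> k\<close>. Hence the second moment of the
  count is at most \<open>K + K\<^sup>2\<close>, while the hypothesis on the conditional probabilities makes
  its mean at least \<open>cK\<close>; Chebyshev's inequality for the lower tail gives the bound.\<close>

lemma sets_stream_space_all_less:
  assumes [measurable]: "A \<in> sets M"
  shows "{w\<in>space (stream_space M). \<forall>s<t. w !! s \<in> A} \<in> sets (stream_space M)"
  by measurable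

lemma (in prob_space) emeasure_stream_space_all_less:
  assumes A: "A \<in> sets M"
  shows "emeasure (stream_space M) {w\<in>space (stream_space M). \<forall>s<t. w !! s \<in> A}
     = emeasure M A ^ t"
proof (induction t)
  case 0
  interpret S: prob_space "stream_space M" by (rule prob_space_stream_space)
  show ?case by (simp add: S.emeasure_space_1)
next
  case (Suc t)
  let ?S = "stream_space M"
  let ?E = "\<lambda>t. {w\<in>space ?S. \<forall>s<t. w !! s \<in> A}"
  have "emeasure ?S (?E (Suc t)) = (\<integral>\<^sup>+x. emeasure ?S {w\<in>space ?S. x ## w \<in> ?E (Suc t)} \<partial>M)"
    by (rule emeasure_stream_space[OF sets_stream_space_all_less[OF A]])
  also have "\<dots> = (\<integral>\<^sup>+x. emeasure ?S (?E t) * indicator A x \<partial>M)"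
  proof (rule nn_integral_cong)
    fix x assume x: "x \<in> space M"
    have "{w\<in>space ?S. x ## w \<in> ?E (Suc t)} = (if x \<in> A then ?E t else {})"
      using x by (auto simp: space_stream_space All_less_Suc2)
    then show "emeasure ?S {w\<in>space ?S. x ## w \<in> ?E (Suc t)} = emeasure ?S (?E t) * indicator A x"
      by (simp split: split_indicator)
  qed
  also have "\<dots> = emeasure ?S (?E t) * emeasure M A"
    by (rule nn_integral_cmult_indicator[OF A])
  finally show ?case using Suc by (simp add: mult.commute)
qed

lemma (in prob_space) measure_stream_space_all_less:
  assumes "A \<in> sets M"
  shows "measure (stream_space M) {w\<in>space (stream_space M). \<forall>s<t. w !! s \<in> A}
     = measure M A ^ t"
proof -
  interpret S: prob_space "stream_space M" by (rule prob_space_stream_space)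
  show ?thesis
    using emeasure_stream_space_all_less[OF assms, of t]
    by (simp add: S.emeasure_eq_measure emeasure_eq_measure ennreal_power)
qed

lemma (in prob_space) measure_stream_space_avoid_disjoint_le:
  fixes t :: nat
  assumes U: "U \<in> sets M" and V: "V \<in> sets M" and UV: "U \<inter> V = {}"
  defines "avoid X \<equiv> {w\<in>space (stream_space M). \<forall>s<t. w !! s \<notin> X}"
  shows "measure (stream_space M) (avoid U \<inter> avoid V)
    \<le> measure (stream_space M) (avoid U) * measure (stream_space M) (avoid V)"
proof -
  have avoid_eq: "avoid X = {w\<in>space (stream_space M). \<forall>s<t. w !! s \<in> space M - X}" for X
    by (auto simp: avoid_def space_stream_space snth_in)
  have prob_avoid: "measure (stream_space M) (avoid X) = (1 - prob X) ^ t" if "X \<in> sets M" for X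
    unfolding avoid_eq using that
    by (simp only: measure_stream_space_all_less sets.compl_sets prob_compl)
  have prob_Un: "prob (U \<union> V) = prob U + prob V"
    using U V UV by (simp add: finite_measure_Union)
  have "avoid U \<inter> avoid V = avoid (U \<union> V)"
    by (auto simp: avoid_def)
  then have "measure (stream_space M) (avoid U \<inter> avoid V) = (1 - (prob U + prob V)) ^ t"
    using U V by (simp only: prob_avoid prob_Un sets.Un)
  also have "\<dots> \<le> ((1 - prob U) * (1 - prob V)) ^ t"
  proof (rule power_mono)
    show "0 \<le> 1 - (prob U + prob V)"
      using prob_le_1[of "U \<union> V"] prob_Un by linarith
    show "1 - (prob U + prob V) \<le> (1 - prob U) * (1 - prob V)"
      using measure_nonneg[of M U] measure_nonneg[of M V] by (simp add: algebra_simps)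
  qed
  also have "\<dots> = measure (stream_space M) (avoid U) * measure (stream_space M) (avoid V)"
    using U V by (simp only: prob_avoid power_mult_distrib)
  finally show ?thesis .
qed

lemma sum_indicator_squared:
  "(\<Sum>j\<in>D. indicator (E j) w :: 'b::comm_semiring_1)^2 = (\<Sum>j\<in>D. \<Sum>k\<in>D. indicator (E j \<inter> E k) w)"
  by (simp add: power2_eq_square sum_product indicator_inter_arith)

lemma (in prob_space) integrable_sum_indicator:
  assumes "\<And>j. j \<in> D \<Longrightarrow> E j \<in> events"
  shows "integrable M (\<lambda>w. \<Sum>j\<in>D. indicator (E j) w :: real)"
  using assms by (auto simp: less_top[symmetric])

lemma (in prob_space) expectation_sum_indicator:
  assumes "\<And>j. j \<in> D \<Longrightarrow> E j \<in> events"
  shows "expectation (\<lambda>w. \<Sum>j\<in>D. indicator (E j) w :: real) = (\<Sum>j\<in>D. prob (E j))"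
  using assms by (subst Bochner_Integration.integral_sum) (auto simp: less_top[symmetric])

lemma (in prob_space) integrable_sum_indicator_squared:
  assumes "\<And>j. j \<in> D \<Longrightarrow> E j \<in> events"
  shows "integrable M (\<lambda>w. (\<Sum>j\<in>D. indicator (E j) w :: real)^2)"
  unfolding sum_indicator_squared using assms by (auto simp: less_top[symmetric])

lemma (in prob_space) expectation_sum_indicator_squared:
  assumes "\<And>j. j \<in> D \<Longrightarrow> E j \<in> events"
  shows "expectation (\<lambda>w. (\<Sum>j\<in>D. indicator (E j) w :: real)^2) = (\<Sum>j\<in>D. \<Sum>k\<in>D. prob (E j \<inter> E k))"
  unfolding sum_indicator_squared using assms
  by (subst Bochner_Integration.integral_sum, auto simp: less_top[symmetric])+

lemma (in prob_space) sum_prob_Int_le_of_neg_correlated: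
  assumes "finite D"
    and neg: "\<And>j k. j \<in> D \<Longrightarrow> k \<in> D \<Longrightarrow> j \<noteq> k \<Longrightarrow> prob (E j \<inter> E k) \<le> prob (E j) * prob (E k)"
  shows "(\<Sum>j\<in>D. \<Sum>k\<in>D. prob (E j \<inter> E k)) \<le> (\<Sum>j\<in>D. prob (E j)) + (\<Sum>j\<in>D. prob (E j))^2"
proof -
  have "(\<Sum>j\<in>D. \<Sum>k\<in>D. prob (E j \<inter> E k))
      \<le> (\<Sum>j\<in>D. \<Sum>k\<in>D. (if j = k then prob (E j) else 0) + prob (E j) * prob (E k))"
    using neg by (intro sum_mono) auto
  also have "\<dots> = (\<Sum>j\<in>D. prob (E j)) + (\<Sum>j\<in>D. prob (E j))^2"
    using \<open>finite D\<close> by (simp add: sum.distrib power2_eq_square sum_product)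
  finally show ?thesis .
qed

lemma (in prob_space) prob_le_fraction_of_expectation:
  fixes X :: "'a \<Rightarrow> real"
  assumes [measurable]: "X \<in> borel_measurable M"
    and X2: "integrable M (\<lambda>w. (X w)^2)" and pos: "0 < expectation X" and r: "r < 1"
  shows "prob {w\<in>space M. X w \<le> r * expectation X} \<le> variance X / ((1 - r) * expectation X)^2"
proof -
  have "prob {w\<in>space M. X w \<le> r * expectation X}
      \<le> prob {w\<in>space M. (1 - r) * expectation X \<le> \<bar>X w - expectation X\<bar>}"
    by (rule finite_measure_mono) (auto simp: algebra_simps)
  also have "\<dots> \<le> variance X / ((1 - r) * expectation X)^2"
    using pos r by (intro Chebyshev_inequality X2) auto
  finally show ?thesis .
qed

lemma variance_ratio_le:
  fixes K c r m m2 :: real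
  assumes K: "K > 0" and c: "c > 0" and r: "r < 1"
    and m: "c * K \<le> m" and m2: "m2 \<le> K + K^2"
  shows "(m2 - m^2) / ((1 - r) * m)^2 \<le> (K + (1 - c^2) * K^2) / ((1 - r)^2 * c^2 * K^2)"
proof -
  have cK: "c * K > 0" using K c by simp
  have "m2 / m^2 \<le> (K + K^2) / (c*K)^2"
    using K m2 cK m by (intro frac_le power_mono) auto
  then have "(m2 / m^2 - 1) / (1-r)^2 \<le> ((K + K^2) / (c*K)^2 - 1) / (1-r)^2"
    by (intro divide_right_mono) auto
  moreover have "(m2 - m^2) / ((1 - r) * m)^2 = (m2 / m^2 - 1) / (1-r)^2"
    using cK m r by (simp add: divide_simps)
  moreover have "((K + K^2) / (c*K)^2 - 1) / (1-r)^2 = (K + (1 - c^2) * K^2) / ((1 - r)^2 * c^2 * K^2)"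
    using K c r by (simp add: field_simps)
  ultimately show ?thesis by simp
qed

lemma (in prob_space) cond_prob_lower_bound:
  assumes "0 < c" and "c \<le> cond_prob M P Q"
  shows "0 < \<P>(w in M. Q w)" and "c * \<P>(w in M. Q w) \<le> \<P>(w in M. P w \<and> Q w)"
proof -
  have "\<P>(w in M. Q w) \<noteq> 0"
    using assms by (auto simp: cond_prob_def)
  then show pos: "0 < \<P>(w in M. Q w)"
    using measure_nonneg[of M "{w\<in>space M. Q w}"] by linarith
  show "c * \<P>(w in M. Q w) \<le> \<P>(w in M. P w \<and> Q w)"
    using assms(2) pos by (simp add: cond_prob_def pos_le_divide_eq)
qed

lemma (in prob_space) prob_sum_indicator_le_fraction_of_expectation:
  fixes D :: "'i set" and E F :: "'i \<Rightarrow> 'a set" and c r :: real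
  defines "K \<equiv> \<Sum>j\<in>D. prob (E j)"
    and "Y \<equiv> \<lambda>w. \<Sum>j\<in>D. indicator (F j) w :: real"
  assumes "finite D"
    and E: "\<And>j. j \<in> D \<Longrightarrow> E j \<in> events" and F: "\<And>j. j \<in> D \<Longrightarrow> F j \<in> events"
    and F_sub: "\<And>j. j \<in> D \<Longrightarrow> F j \<subseteq> E j"
    and neg: "\<And>j k. j \<in> D \<Longrightarrow> k \<in> D \<Longrightarrow> j \<noteq> k \<Longrightarrow> prob (E j \<inter> E k) \<le> prob (E j) * prob (E k)"
    and c: "0 < c" and F_ge: "\<And>j. j \<in> D \<Longrightarrow> c * prob (E j) \<le> prob (F j)"
    and K: "0 < K" and r: "r < 1"
  shows "prob {w\<in>space M. Y w \<le> r * expectation Y} \<le> (K + (1 - c^2) * K^2) / ((1 - r)^2 * c^2 * K^2)"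
proof -
  have EY: "expectation Y = (\<Sum>j\<in>D. prob (F j))"
    unfolding Y_def using F by (rule expectation_sum_indicator)
  have EY_ge: "c * K \<le> expectation Y"
    unfolding EY K_def sum_distrib_left using F_ge by (rule sum_mono)
  have EY2: "expectation (\<lambda>w. (Y w)^2) = (\<Sum>j\<in>D. \<Sum>k\<in>D. prob (F j \<inter> F k))"
    unfolding Y_def using F by (rule expectation_sum_indicator_squared)
  also have "\<dots> \<le> (\<Sum>j\<in>D. \<Sum>k\<in>D. prob (E j \<inter> E k))"
    using E F_sub by (intro sum_mono finite_measure_mono) auto
  also have "\<dots> \<le> K + K^2"
    unfolding K_def using \<open>finite D\<close> neg by (rule sum_prob_Int_le_of_neg_correlated)
  finally have EY2_le: "expectation (\<lambda>w. (Y w)^2) \<le> K + K^2" .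
  have Y2_int: "integrable M (\<lambda>w. (Y w)^2)"
    unfolding Y_def using F by (rule integrable_sum_indicator_squared)
  have Y_int: "integrable M Y"
    unfolding Y_def using F by (rule integrable_sum_indicator)
  have "variance Y = expectation (\<lambda>w. (Y w)^2) - (expectation Y)^2"
    using Y_int Y2_int by (rule variance_eq)
  moreover have "prob {w\<in>space M. Y w \<le> r * expectation Y} \<le> variance Y / ((1 - r) * expectation Y)^2"
  proof (rule prob_le_fraction_of_expectation[OF _ Y2_int _ r])
    show "Y \<in> borel_measurable M"
      unfolding Y_def using F by measurable
    show "0 < expectation Y"
      using EY_ge c K by (meson mult_pos_pos order_less_le_trans)
  qed
  ultimately show ?thesis
    using variance_ratio_le[OF K c r EY_ge EY2_le] by simp
qed

lemma card_Int_eq_sum_indicator: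
  assumes "finite D"
  shows "real (card (D \<inter> X w)) = (\<Sum>j\<in>D. indicator {v. j \<in> X v} w)"
proof -
  have "real (card (D \<inter> X w)) = real (\<Sum>j\<in>D. indicator (X w) j)"
    by (simp only: sum_indicator_eq_card[OF assms])
  also have "\<dots> = (\<Sum>j\<in>D. indicator (X w) j)"
    by (simp add: indicator_def)
  finally show ?thesis
    by (simp add: indicator_def)
qed

lemma space_shuffle_space [simp]: "space (shuffle_space n) = UNIV"
  by (simp add: shuffle_space_def space_stream_space)

lemma prob_space_shuffle_space: "prob_space (shuffle_space n)"
  unfolding shuffle_space_def by (rule prob_space.prob_space_stream_space[OF prob_space_measure_pmf])

lemma unchosen_eq_avoid:
  assumes "j \<in> {1..n}"
  shows "{w. j \<in> unchosen n t w} = {w\<in>space (shuffle_space n). \<forall>s<t. w !! s \<notin> {x. fst x = j}}"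
  using assms by (auto simp: unchosen_def)

lemma sets_unchosen: "{w. j \<in> unchosen n t w} \<in> sets (shuffle_space n)"
proof (cases "j \<in> {1..n}")
  case True
  have "{w. j \<in> unchosen n t w} = {w\<in>space (shuffle_space n). \<forall>s<t. w !! s \<in> - {x. fst x = j}}"
    using True by (auto simp: unchosen_def)
  then show ?thesis
    unfolding shuffle_space_def by (simp add: sets_stream_space_all_less)
next
  case False
  then have "{w. j \<in> unchosen n t w} = {}"
    by (auto simp: unchosen_def)
  then show ?thesis
    by simp
qed

lemma unchosen_neg_correlated:
  assumes "j \<in> {1..n}" "k \<in> {1..n}" "j \<noteq> k"
  shows "measure (shuffle_space n) ({w. j \<in> unchosen n t w} \<inter> {w. k \<in> unchosen n t w})
    \<le> measure (shuffle_space n) {w. j \<in> unchosen n t w} * measure (shuffle_space n) {w. k \<in> unchosen n t w}"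
  unfolding unchosen_eq_avoid[OF assms(1)] unchosen_eq_avoid[OF assms(2)] shuffle_space_def
  using assms(3)
  by (intro prob_space.measure_stream_space_avoid_disjoint_le[OF prob_space_measure_pmf]) auto

theorem lemma2:
  fixes n t :: nat and B :: "(nat \<times> nat) stream \<Rightarrow> nat set" and D :: "nat set"
    and c r :: real
  assumes B_sub: "\<And>w. w \<in> space (shuffle_space n) \<Longrightarrow> B w \<subseteq> {1..n}"
    and B_meas: "\<And>j. {w \<in> space (shuffle_space n). j \<in> B w} \<in> sets (shuffle_space n)"
    and D_sub: "D \<subseteq> {1..n}" and D_ne: "D \<noteq> {}"
    and c_pos: "c > 0"
    and hyp: "Min ((\<lambda>j. cond_prob (shuffle_space n) (\<lambda>w. j \<in> B w) (\<lambda>w. j \<in> unchosen n t w)) ` D) \<ge> c"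
    and r: "0 < r" "r < 1"
  shows "(let K = (\<integral>w. real (card (D \<inter> unchosen n t w)) \<partial>shuffle_space n);
              EY = (\<integral>w. real (card (B w \<inter> D \<inter> unchosen n t w)) \<partial>shuffle_space n)
          in measure (shuffle_space n)
               {w \<in> space (shuffle_space n). real (card (B w \<inter> D \<inter> unchosen n t w)) \<le> r * EY}
             \<le> (K + (1 - c\<^sup>2) * K\<^sup>2) / ((1 - r)\<^sup>2 * c\<^sup>2 * K\<^sup>2))"
proof -
  interpret S: prob_space "shuffle_space n" by (rule prob_space_shuffle_space)
  have "finite D" using D_sub finite_subset by blast
  define E where "E j = {w. j \<in> unchosen n t w}" for j
  define F where "F j = {w. j \<in> B w \<inter> unchosen n t w}" for j
  have E_sets: "E j \<in> S.events" for j
    unfolding E_def by (rule sets_unchosen)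
  have F_sets: "F j \<in> S.events" for j
  proof -
    have "F j = {w \<in> space (shuffle_space n). j \<in> B w} \<inter> E j"
      by (auto simp: E_def F_def)
    then show ?thesis using B_meas E_sets by auto
  qed
  have cond_ge: "c \<le> cond_prob (shuffle_space n) (\<lambda>w. j \<in> B w) (\<lambda>w. j \<in> unchosen n t w)"
    if "j \<in> D" for j
    using hyp \<open>finite D\<close> that by (auto intro: order_trans[OF _ Min_le])
  have E_pos: "0 < S.prob (E j)" and F_ge: "c * S.prob (E j) \<le> S.prob (F j)" if "j \<in> D" for j
    using S.cond_prob_lower_bound[OF c_pos cond_ge[OF that]] by (simp_all add: E_def F_def)
  have K_pos: "0 < (\<Sum>j\<in>D. S.prob (E j))"
    using \<open>finite D\<close> D_ne E_pos by (intro sum_pos) auto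
  have neg: "S.prob (E j \<inter> E k) \<le> S.prob (E j) * S.prob (E k)" if "j \<in> D" "k \<in> D" "j \<noteq> k" for j k
    using that D_sub unfolding E_def by (intro unchosen_neg_correlated) auto
  have K_eq: "(\<integral>w. real (card (D \<inter> unchosen n t w)) \<partial>shuffle_space n) = (\<Sum>j\<in>D. S.prob (E j))"
    using E_sets unfolding card_Int_eq_sum_indicator[OF \<open>finite D\<close>] E_def
    by (rule S.expectation_sum_indicator)
  have Y_eq: "real (card (B w \<inter> D \<inter> unchosen n t w)) = (\<Sum>j\<in>D. indicator (F j) w)" for w
    using card_Int_eq_sum_indicator[OF \<open>finite D\<close>, of "\<lambda>w. B w \<inter> unchosen n t w" w]
    by (simp add: F_def Int_ac)
  show ?thesis
    unfolding Let_def K_eq Y_eq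
    using S.prob_sum_indicator_le_fraction_of_expectation[OF \<open>finite D\<close> E_sets F_sets _ neg c_pos F_ge K_pos r(2)]
    by (auto simp: E_def F_def)
qed

end
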